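(* Let $k \ge 1$ and let $\tau_0, \tau_1, \ldots, \tau_t \in \{0,1\}^{2^k}$ be such that (1) for every $i \in \{1,\dots,t\}$, $\tau_i$ and $\tau_{i-1}$ differ in exactly one coordinate; (2) for every $i \in \{1,\dots,t\}$, $\mathrm{mem}(\tau_i)$ and $\mathrm{mem}(\tau_{i-1})$ differ in exactly one coordinate; and (3) $\mathrm{mem}(\tau_t) = \mathrm{mem}(\tau_0)$. Then $\tau_t = \tau_0$.
   Context: Index the coordinates of $\tau \in \{0,1\}^{2^k}$ by $J \in \{0,1,\dots,2^k-1\}$, and for such $J$ let $\mathrm{bin}(J) \in \{0,1\}^k$ be its binary representation, with coordinates indexed by $j \in \{0,\dots,k-1\}$ so that $J = \sum_j \mathrm{bin}(J)_j 2^j$. The map $\mathrm{mem}: \{0,1\}^{2^k} \to \{0,1\}^k$ is defined by $\mathrm{mem}(\tau)_j = \bigoplus_{J=0}^{2^k-1} \mathrm{bin}(J)_j \cdot \tau_J$ for each $j \in \{0,\dots,k-1\}$. *)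

theory Defs
  imports Main
begin

text \<open>Vectors in {0,1}^n are represented as bool lists of length n
  (True = 1). Coordinate J of tau is tau ! J; bin(J)_j is bit J j.\<close>

definition mem :: "nat \<Rightarrow> bool list \<Rightarrow> bool list" where
  "mem k \<tau> = map (\<lambda>j. odd (card {J. J < 2 ^ k \<and> bit J j \<and> \<tau> ! J})) [0..<k]"

definition differ_one :: "bool list \<Rightarrow> bool list \<Rightarrow> bool" where
  "differ_one x y \<longleftrightarrow> length x = length y \<and> card {i. i < length x \<and> x ! i \<noteq> y ! i} = 1"

end

theory Submission
  imports Defs
begin

text \<open>Over GF(2), mem is linear, and flipping coordinate J changes mem k by bin(J).
  Hence each step of the walk flips a coordinate whose binary representation has
  exactly one 1, i.e. a power of two 2^j with j < k. So \<tau> t and \<tau> 0 differ only at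
  powers of two; but then mem k (\<tau> t) and mem k (\<tau> 0) differ at position j exactly
  when they differ at 2^j, and equality of the mem values forces \<tau> t = \<tau> 0.\<close>

definition diff_positions :: "bool list \<Rightarrow> bool list \<Rightarrow> nat set" where
  "diff_positions x y = {i. i < length x \<and> x ! i \<noteq> y ! i}"

lemma differ_one_iff: "differ_one x y \<longleftrightarrow> length x = length y \<and> card (diff_positions x y) = 1"
  by (simp add: differ_one_def diff_positions_def)

lemma diff_positions_trans:
  assumes "length x = length y"
  shows "diff_positions x z \<subseteq> diff_positions x y \<union> diff_positions y z"
  using assms by (auto simp: diff_positions_def)

lemma diff_positions_chain:
  fixes t :: nat
  assumes "\<forall>i\<le>t. length (\<tau> i) = n"
    and "\<forall>i\<in>{1..t}. diff_positions (\<tau> i) (\<tau> (i - 1)) \<subseteq> P"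
  shows "diff_positions (\<tau> t) (\<tau> 0) \<subseteq> P"
  using assms
proof (induction t)
  case 0
  then show ?case by (simp add: diff_positions_def)
next
  case (Suc t)
  have "diff_positions (\<tau> t) (\<tau> 0) \<subseteq> P"
    using Suc.prems by (intro Suc.IH) auto
  moreover have "diff_positions (\<tau> (Suc t)) (\<tau> t) \<subseteq> P"
    using bspec[OF Suc.prems(2), of "Suc t"] by simp
  moreover have "diff_positions (\<tau> (Suc t)) (\<tau> 0) \<subseteq> diff_positions (\<tau> (Suc t)) (\<tau> t) \<union> diff_positions (\<tau> t) (\<tau> 0)"
    using Suc.prems(1) by (intro diff_positions_trans) simp
  ultimately show ?case
    by blast
qed

lemma odd_card_filter_neq:
  assumes "finite A"
  shows "(odd (card {a\<in>A. P a}) \<noteq> odd (card {a\<in>A. Q a})) \<longleftrightarrow> odd (card {a\<in>A. P a \<noteq> Q a})"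
  using assms
proof (induction A rule: finite_induct)
  case empty
  then show ?case by simp
next
  case (insert b A)
  have filter_insert: "{a\<in>insert b A. R a} = (if R b then insert b {a\<in>A. R a} else {a\<in>A. R a})" for R
    by auto
  have card_insert: "card (insert b {a\<in>A. R a}) = Suc (card {a\<in>A. R a})" for R
    using insert.hyps by simp
  show ?case
    using insert.IH by (simp only: filter_insert card_insert split: if_splits) auto
qed

lemma length_mem [simp]: "length (mem k x) = k"
  by (simp add: mem_def)

lemma mem_nth_neq_iff:
  assumes "j < k" and "length x = 2 ^ k"
  shows "mem k x ! j \<noteq> mem k y ! j \<longleftrightarrow> odd (card {J \<in> diff_positions x y. bit J j})"
proof -
  let ?A = "{J. J < 2 ^ k \<and> bit J j}"
  have "mem k z ! j = odd (card {J\<in>?A. z ! J})" for z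
    using assms(1) by (simp add: mem_def conj_assoc)
  moreover have "{J\<in>?A. x ! J \<noteq> y ! J} = {J \<in> diff_positions x y. bit J j}"
    using assms(2) by (auto simp: diff_positions_def)
  ultimately show ?thesis
    using odd_card_filter_neq[of ?A "\<lambda>J. x ! J" "\<lambda>J. y ! J"] by simp
qed

lemma eq_exp_if_bits_eq_singleton:
  fixes n :: nat
  assumes "n < 2 ^ k" and "{j. j < k \<and> bit n j} = {i}"
  shows "n = 2 ^ i"
proof (rule bit_eqI)
  fix m
  have "i < k" using assms(2) by blast
  have "\<not> bit n m" if "k \<le> m"
    using that take_bit_nat_eq_self[OF assms(1)] by (metis bit_take_bit_iff not_less)
  then show "bit n m \<longleftrightarrow> bit (2 ^ i :: nat) m"
    using assms(2) \<open>i < k\<close> by (cases "m < k") (auto simp: bit_exp_iff)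
qed

lemma diff_positions_subset_powers:
  assumes "length x = 2 ^ k"
    and "differ_one x y" and "differ_one (mem k x) (mem k y)"
  shows "diff_positions x y \<subseteq> (\<lambda>j. 2 ^ j) ` {..<k}"
proof -
  obtain J where J: "diff_positions x y = {J}"
    using assms(2) by (auto simp: differ_one_iff card_1_singleton_iff)
  have "J < 2 ^ k"
    using J assms(1) by (auto simp: diff_positions_def)
  have "j \<in> diff_positions (mem k x) (mem k y) \<longleftrightarrow> bit J j" if "j < k" for j
  proof -
    have "{J' \<in> diff_positions x y. bit J' j} = (if bit J j then {J} else {})"
      using J by auto
    then show ?thesis
      using mem_nth_neq_iff[OF that assms(1)] that by (simp add: diff_positions_def)
  qed
  then have "diff_positions (mem k x) (mem k y) = {j. j < k \<and> bit J j}"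
    by (auto simp: diff_positions_def)
  then obtain i where "{j. j < k \<and> bit J j} = {i}"
    using assms(3) by (auto simp: differ_one_iff card_1_singleton_iff)
  then have "i < k" and "J = 2 ^ i"
    using eq_exp_if_bits_eq_singleton[OF \<open>J < 2 ^ k\<close>] by auto
  then show ?thesis
    using J by auto
qed

lemma eq_if_mem_eq_and_diff_positions_subset_powers:
  assumes "length x = 2 ^ k" and "length y = 2 ^ k"
    and "diff_positions x y \<subseteq> (\<lambda>j. 2 ^ j) ` {..<k}"
    and "mem k x = mem k y"
  shows "x = y"
proof -
  have "2 ^ j \<notin> diff_positions x y" if "j < k" for j
  proof
    assume "2 ^ j \<in> diff_positions x y"
    then have "{J \<in> diff_positions x y. bit J j} = {2 ^ j}"
      using assms(3) by (auto simp: bit_exp_iff)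
    then show False
      using mem_nth_neq_iff[OF that assms(1), of y] assms(4) by simp
  qed
  then have "diff_positions x y = {}"
    using assms(3) by blast
  then show ?thesis
    using assms(1,2) by (auto simp: diff_positions_def intro: nth_equalityI)
qed

theorem claim3p6:
  fixes k t :: nat and \<tau> :: "nat \<Rightarrow> bool list"
  assumes "k \<ge> 1"
    and "\<forall>i\<le>t. length (\<tau> i) = 2 ^ k"
    and "\<forall>i\<in>{1..t}. differ_one (\<tau> i) (\<tau> (i - 1))"
    and "\<forall>i\<in>{1..t}. differ_one (mem k (\<tau> i)) (mem k (\<tau> (i - 1)))"
    and "mem k (\<tau> t) = mem k (\<tau> 0)"
  shows "\<tau> t = \<tau> 0"
proof (rule eq_if_mem_eq_and_diff_positions_subset_powers)
  show "diff_positions (\<tau> t) (\<tau> 0) \<subseteq> (\<lambda>j. 2 ^ j) ` {..<k}"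
  proof (rule diff_positions_chain)
    show "\<forall>i\<in>{1..t}. diff_positions (\<tau> i) (\<tau> (i - 1)) \<subseteq> (\<lambda>j. 2 ^ j) ` {..<k}"
      using assms(2-4) diff_positions_subset_powers by simp
  qed (use assms(2) in blast)
qed (use assms(2,5) in auto)

end
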